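(* Let $p\ge1$, assume $\mathrm{diam}(\mathcal X)\le C_{\mathcal X}$, $\mathrm{diam}(\mathcal Y)\le C_{\mathcal Y}$, and let $C_1,C_2$ satisfy the requirements of the GOSPA1 and GOSPA2 definitions (including, if $p>1$, the condition on $d_{\mathcal Y}$ for GOSPA2). Then for all graphs in $\mathbb G$: (a) $d_{\mathbb G,R_1}(([n],v,e),([n],w,f))=d_{\mathbb G,R_2}(([n],v,e),([n],w,f))$ for graphs of equal size $n$; (b) if $C_1^p\le C_2^p-\frac12C_{\mathcal Y}^p$, then $d_{\mathbb G,R_1}(([m],v,e),([n],w,f))\le d_{\mathbb G,R_2}(([m],v,e),([n],w,f))$; (c) if $C_2^p\le C_1^p-\frac12C_{\mathcal Y}^p$, then $d_{\mathbb G,R_1}(([m],v,e),([n],w,f))\ge d_{\mathbb G,R_2}(([m],v,e),([n],w,f))$; (d) if $C>0$ satisfies $C^p\ge C_i^p$ ($i\in\{1,2\}$), then $d_{\mathbb G,A}(([m],v,e),([n],w,f))\ge d_{\mathbb G,R_i}(([m],v,e),([n],w,f))$, where $d_{\mathbb G,A}$ uses penalty $C$ and the same order $p$.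
   Context: Let $(\mathcal X,d_{\mathcal X})$ and $(\mathcal Y,d_{\mathcal Y})$ be pseudometric spaces (symmetric, satisfying the triangle inequality, $d(z,z)=0$), with a distinguished element $y_0\in\mathcal Y$ meaning "no edge". For $n\in\mathbb N_0$ write $[n]=\{1,\dots,n\}$ ($[0]=\emptyset$) and $S_n$ for the set of permutations of $[n]$. An attributed simple graph is a triple $([n],v,e)$ with $v:[n]\to\mathcal X$ and $e:[n]^2\to\mathcal Y$ symmetric ($e(i,i')=e(i',i)$) with $e(i,i)=y_0$ for all $i$; write $v_i=v(i)$, $e_{ii'}=e(i,i')$. Two graphs $([n],v,e)$, $([n],w,f)$ are regarded as equal if there is $\pi\in S_n$ with $v_i=w_{\pi(i)}$ and $e_{ii'}=f_{\pi(i)\pi(i')}$ for all $i,i'\in[n]$; $\mathbb G$ denotes the set of such graphs. GTT distance: for $p\ge1$, $C>0$ and $([m],v,e),([n],w,f)\in\mathbb G$ with $m\le n$, $$d_{\mathbb G,A}(([m],v,e),([n],w,f))=\min_{I\subset[m],\,\pi\in S_n}\Big[(m+n-2|I|)C^p+\sum_{i\in I}d_{\mathcal X}(v_i,w_{\pi(i)})^p+\tfrac12\sum_{(i,i')\in I^2}d_{\mathcal Y}(e_{ii'},f_{\pi(i)\pi(i')})^p+\tfrac12\sum_{(i,i')\in[m]^2\setminus I^2}d_{\mathcal Y}(e_{ii'},y_0)^p+\tfrac12\sum_{(j,j')\in[n]^2\setminus\pi(I)^2}d_{\mathcal Y}(y_0,f_{jj'})^p\Big]^{1/p},$$ and for $m>n$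 it is defined by swapping the two arguments. GOSPA distances: assume $\mathrm{diam}(\mathcal X)\le C_{\mathcal X}$, $\mathrm{diam}(\mathcal Y)\le C_{\mathcal Y}$, $p\ge1$. For $([m],v,e),([n],w,f)\in\mathbb G$ with $n\ge\max\{m,1\}$ (otherwise swap arguments; both distances are $0$ if $m=n=0$), using the convention $0/0:=0$: GOSPA1 (penalty $C_1^p\ge C_{\mathcal X}^p+\frac12C_{\mathcal Y}^p$): $$d_{\mathbb G,R_1}=\frac{1}{n^{1/p}}\min_{\pi\in S_n}\Big[(n-m)C_1^p+\sum_{i\in[m]}d_{\mathcal X}(v_i,w_{\pi(i)})^p+\frac12\frac1{n-1}\sum_{i\in[m]}\Big(\sum_{i'\in[m]}d_{\mathcal Y}(e_{ii'},f_{\pi(i)\pi(i')})^p+(n-m)C_{\mathcal Y}^p\Big)\Big]^{1/p};$$ GOSPA2 (penalty $C_2^p\ge C_{\mathcal X}^p+C_{\mathcal Y}^p$; for $p>1$ additionally requiring $d_{\mathcal Y}(y_1,y_2)\le\max\{d_{\mathcal Y}(y_1,y_0),d_{\mathcal Y}(y_0,y_2)\}$ for all $y_1,y_2$): $$d_{\mathbb G,R_2}=\frac{1}{n^{1/p}}\min_{\pi\in S_n}\Big[(n-m)C_2^p+\sum_{i\in[m]}d_{\mathcal X}(v_i,w_{\pi(i)})^p+\frac12\frac1{n-1}\Big(\sum_{(i,i')\in[m]^2}d_{\mathcal Y}(e_{ii'},f_{\pi(i)\pi(i')})^p+\sum_{(i,i')\in[n]^2\setminus[m]^2}d_{\mathcal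 Y}(y_0,f_{\pi(i)\pi(i')})^p\Big)\Big]^{1/p}.$$ *)

theory Defs
  imports "HOL-Analysis.Analysis" "HOL-Combinatorics.Permutations"
begin

text \<open>An attributed simple graph ([n],v,e) is represented by its size n, vertex
attributes v (used on {1..n}) and edge attributes e (used on {1..n}^2).
All distances below are invariant under relabelling, so they are stated on
representatives.\<close>

definition pseudometric :: "('a \<Rightarrow> 'a \<Rightarrow> real) \<Rightarrow> bool" where
  "pseudometric d \<longleftrightarrow> (\<forall>x. d x x = 0) \<and> (\<forall>x y. d x y = d y x)
     \<and> (\<forall>x y z. d x z \<le> d x y + d y z)"

definition attr_graph :: "'y \<Rightarrow> nat \<Rightarrow> (nat \<Rightarrow> nat \<Rightarrow> 'y) \<Rightarrow> bool" where
  "attr_graph y0 n e \<longleftrightarrow> (\<forall>i\<in>{1..n}. \<forall>i'\<in>{1..n}. e i i' = e i' i) \<and> (\<forall>i\<in>{1..n}. e i i = y0)"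

definition gtt_core ::
  "('x \<Rightarrow> 'x \<Rightarrow> real) \<Rightarrow> ('y \<Rightarrow> 'y \<Rightarrow> real) \<Rightarrow> 'y \<Rightarrow> real \<Rightarrow> real \<Rightarrow>
   nat \<Rightarrow> (nat \<Rightarrow> 'x) \<Rightarrow> (nat \<Rightarrow> nat \<Rightarrow> 'y) \<Rightarrow> nat \<Rightarrow> (nat \<Rightarrow> 'x) \<Rightarrow> (nat \<Rightarrow> nat \<Rightarrow> 'y) \<Rightarrow> real" where
  "gtt_core dX dY y0 p C m v e n w f =
     (Min ((\<lambda>(I, \<pi>).
        (real m + real n - 2 * real (card I)) * C powr p
        + (\<Sum>i\<in>I. dX (v i) (w (\<pi> i)) powr p)
        + 1/2 * (\<Sum>(i, i')\<in>I \<times> I. dY (e i i') (f (\<pi> i) (\<pi> i')) powr p)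
        + 1/2 * (\<Sum>(i, i')\<in>({1..m} \<times> {1..m}) - (I \<times> I). dY (e i i') y0 powr p)
        + 1/2 * (\<Sum>(j, j')\<in>({1..n} \<times> {1..n}) - ((\<pi> ` I) \<times> (\<pi> ` I)). dY y0 (f j j') powr p))
      ` (Pow {1..m} \<times> {\<pi>. \<pi> permutes {1..n}}))) powr (1 / p)"

definition gtt_dist where
  "gtt_dist dX dY y0 p C m v e n w f =
     (if m \<le> n then gtt_core dX dY y0 p C m v e n w f else gtt_core dX dY y0 p C n w f m v e)"

text \<open>GOSPA1, case n \<ge> max m 1 (and value 0 for m = n = 0). Division by zero
is 0 in Isabelle, matching the convention 0/0 := 0 when n = 1.\<close>
definition gospa1_core ::
  "('x \<Rightarrow> 'x \<Rightarrow> real) \<Rightarrow> ('y \<Rightarrow> 'y \<Rightarrow> real) \<Rightarrow> real \<Rightarrow> real \<Rightarrow> real \<Rightarrow>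
   nat \<Rightarrow> (nat \<Rightarrow> 'x) \<Rightarrow> (nat \<Rightarrow> nat \<Rightarrow> 'y) \<Rightarrow> nat \<Rightarrow> (nat \<Rightarrow> 'x) \<Rightarrow> (nat \<Rightarrow> nat \<Rightarrow> 'y) \<Rightarrow> real" where
  "gospa1_core dX dY p C1 CY m v e n w f =
     (if n = 0 then 0 else
      1 / (real n powr (1 / p)) *
      (Min ((\<lambda>\<pi>.
          (real n - real m) * C1 powr p
          + (\<Sum>i\<in>{1..m}. dX (v i) (w (\<pi> i)) powr p)
          + 1/2 * (1 / (real n - 1)) *
             (\<Sum>i\<in>{1..m}. (\<Sum>i'\<in>{1..m}. dY (e i i') (f (\<pi> i) (\<pi> i')) powr p)
                             + (real n - real m) * CY powr p))
        ` {\<pi>. \<pi> permutes {1..n}})) powr (1 / p))"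

definition gospa1_dist where
  "gospa1_dist dX dY p C1 CY m v e n w f =
     (if m \<le> n then gospa1_core dX dY p C1 CY m v e n w f else gospa1_core dX dY p C1 CY n w f m v e)"

definition gospa2_core ::
  "('x \<Rightarrow> 'x \<Rightarrow> real) \<Rightarrow> ('y \<Rightarrow> 'y \<Rightarrow> real) \<Rightarrow> 'y \<Rightarrow> real \<Rightarrow> real \<Rightarrow>
   nat \<Rightarrow> (nat \<Rightarrow> 'x) \<Rightarrow> (nat \<Rightarrow> nat \<Rightarrow> 'y) \<Rightarrow> nat \<Rightarrow> (nat \<Rightarrow> 'x) \<Rightarrow> (nat \<Rightarrow> nat \<Rightarrow> 'y) \<Rightarrow> real" where
  "gospa2_core dX dY y0 p C2 m v e n w f =
     (if n = 0 then 0 else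
      1 / (real n powr (1 / p)) *
      (Min ((\<lambda>\<pi>.
          (real n - real m) * C2 powr p
          + (\<Sum>i\<in>{1..m}. dX (v i) (w (\<pi> i)) powr p)
          + 1/2 * (1 / (real n - 1)) *
             ((\<Sum>(i, i')\<in>{1..m} \<times> {1..m}. dY (e i i') (f (\<pi> i) (\<pi> i')) powr p)
              + (\<Sum>(i, i')\<in>({1..n} \<times> {1..n}) - ({1..m} \<times> {1..m}). dY y0 (f (\<pi> i) (\<pi> i')) powr p)))
        ` {\<pi>. \<pi> permutes {1..n}})) powr (1 / p))"

definition gospa2_dist where
  "gospa2_dist dX dY y0 p C2 m v e n w f =
     (if m \<le> n then gospa2_core dX dY y0 p C2 m v e n w f else gospa2_core dX dY y0 p C2 n w f m v e)"

end

theory Submission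
  imports Defs
begin

text \<open>
  For a fixed permutation \<pi>, both GOSPA costs have the shape (n - m) c + X + (E + G) / (2 (n - 1)),
  where only the penalty c and the term G for edges at the n - m unassigned vertices differ:
  GOSPA1 charges CY^p for each of the m (n - m) such pairs, GOSPA2 their actual distance to y0,
  which lies between 0 and (n - m)(n + m - 1) CY^p because diagonal entries are y0.
  This yields (a)-(c) permutation by permutation. For (d), a GTT assignment (I, \<pi>) gives, through \<pi>,
  a GOSPA cost at most n times the GTT cost: by the diameter bounds every vertex or edge left
  unmatched by I costs GOSPA no more than its GTT penalty, and n is exactly the GOSPA normalisation.
  All inequalities then pass through the minima and the p-th roots.
\<close>

lemma pseudometric_nonneg: "pseudometric d \<Longrightarrow> 0 \<le> d x y"
  unfolding pseudometric_def
  by (metis mult_2 zero_le_double_add_iff_zero_le_single_add add_le_cancel_left add_0_right)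

lemma pseudometric_powr_le:
  assumes "pseudometric d" and "\<forall>a b. d a b \<le> D" and "0 \<le> p"
  shows "d x y powr p \<le> D powr p"
  using assms by (intro powr_mono2) (auto simp: pseudometric_nonneg)

lemma real_card_Diff_subset:
  "finite A \<Longrightarrow> B \<subseteq> A \<Longrightarrow> real (card (A - B)) = real (card A) - real (card B)"
  by (simp add: card_Diff_subset of_nat_diff card_mono finite_subset)

lemma permutations_atLeastAtMost:
  "finite {\<pi>. \<pi> permutes {1..n::nat}}" "{\<pi>. \<pi> permutes {1..n::nat}} \<noteq> {}"
  using finite_permutations[of "{1..n}"] permutes_id by blast+

lemma Min_image_le_Min_image:
  assumes "finite A" "finite B" "B \<noteq> {}" and "\<And>y. y \<in> B \<Longrightarrow> \<exists>x\<in>A. f x \<le> (g y :: 'a :: linorder)"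
  shows "Min (f ` A) \<le> Min (g ` B)"
proof -
  have "Min (g ` B) \<in> g ` B"
    using assms(2,3) by simp
  then obtain y where y: "y \<in> B" "Min (g ` B) = g y"
    by auto
  then obtain x where "x \<in> A" "f x \<le> g y"
    using assms(4) by blast
  then show ?thesis
    using y assms(1) by (metis Min_le_iff empty_iff finite_imageI image_eqI)
qed

lemma sum_pairs_permutes_reindex:
  assumes "\<pi> permutes S"
  shows "(\<Sum>(i, i')\<in>S \<times> S - T \<times> T. g (\<pi> i) (\<pi> i')) = (\<Sum>(j, j')\<in>S \<times> S - \<pi> ` T \<times> \<pi> ` T. g j j')"
proof -
  have inj: "inj (map_prod \<pi> \<pi>)"
    using permutes_inj[OF assms] by (simp add: inj_def)
  have "map_prod \<pi> \<pi> ` (S \<times> S - T \<times> T) = S \<times> S - \<pi> ` T \<times> \<pi> ` T"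
    using permutes_image[OF assms] by (simp add: image_set_diff[OF inj] map_prod_surj_on)
  then show ?thesis
    using sum.reindex[OF inj_on_subset[OF inj subset_UNIV], of "\<lambda>(j, j'). g j j'" "S \<times> S - T \<times> T"]
    by (simp add: case_prod_beta)
qed

definition vertex_cost ::
  "('x \<Rightarrow> 'x \<Rightarrow> real) \<Rightarrow> real \<Rightarrow> (nat \<Rightarrow> 'x) \<Rightarrow> (nat \<Rightarrow> 'x) \<Rightarrow> (nat \<Rightarrow> nat) \<Rightarrow> nat set \<Rightarrow> real"
  where "vertex_cost dX p v w \<pi> A = (\<Sum>i\<in>A. dX (v i) (w (\<pi> i)) powr p)"

text \<open>Distances of edges to the empty edge y0 are edge costs with e or f constantly y0.\<close>

definition edge_cost ::
  "('y \<Rightarrow> 'y \<Rightarrow> real) \<Rightarrow> real \<Rightarrow> (nat \<Rightarrow> nat \<Rightarrow> 'y) \<Rightarrow> (nat \<Rightarrow> nat \<Rightarrow> 'y) \<Rightarrow> (nat \<Rightarrow> nat)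
    \<Rightarrow> (nat \<times> nat) set \<Rightarrow> real"
  where "edge_cost dY p e f \<pi> A = (\<Sum>(i, i')\<in>A. dY (e i i') (f (\<pi> i) (\<pi> i')) powr p)"

text \<open>
  X and E are the vertex and edge costs of the m assigned vertices, G the cost of the pairs
  involving an unassigned vertex, c the penalty. For n = 1 the weight 1 / (n - 1) is 1 / 0 = 0.
\<close>

definition gospa_cost :: "nat \<Rightarrow> nat \<Rightarrow> real \<Rightarrow> real \<Rightarrow> real \<Rightarrow> real \<Rightarrow> real"
  where "gospa_cost n m c X E G = (real n - real m) * c + X + 1/2 * (1 / (real n - 1)) * (E + G)"

definition gtt_cost ::
  "('x \<Rightarrow> 'x \<Rightarrow> real) \<Rightarrow> ('y \<Rightarrow> 'y \<Rightarrow> real) \<Rightarrow> 'y \<Rightarrow> real \<Rightarrow> real \<Rightarrow>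
   nat \<Rightarrow> (nat \<Rightarrow> 'x) \<Rightarrow> (nat \<Rightarrow> nat \<Rightarrow> 'y) \<Rightarrow> nat \<Rightarrow> (nat \<Rightarrow> 'x) \<Rightarrow> (nat \<Rightarrow> nat \<Rightarrow> 'y) \<Rightarrow>
   nat set \<Rightarrow> (nat \<Rightarrow> nat) \<Rightarrow> real"
  where "gtt_cost dX dY y0 p C m v e n w f I \<pi> =
    (real m + real n - 2 * real (card I)) * C powr p
    + vertex_cost dX p v w \<pi> I
    + 1/2 * edge_cost dY p e f \<pi> (I \<times> I)
    + 1/2 * edge_cost dY p e (\<lambda>_ _. y0) \<pi> ({1..m} \<times> {1..m} - I \<times> I)
    + 1/2 * edge_cost dY p (\<lambda>_ _. y0) f id ({1..n} \<times> {1..n} - \<pi> ` I \<times> \<pi> ` I)"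

lemma gospa1_core_eq:
  "gospa1_core dX dY p C1 CY m v e n w f = (if n = 0 then 0 else
     1 / real n powr (1/p) * Min ((\<lambda>\<pi>. gospa_cost n m (C1 powr p) (vertex_cost dX p v w \<pi> {1..m})
        (edge_cost dY p e f \<pi> ({1..m} \<times> {1..m})) (real m * (real n - real m) * CY powr p))
       ` {\<pi>. \<pi> permutes {1..n}}) powr (1/p))"
  unfolding gospa1_core_def gospa_cost_def vertex_cost_def edge_cost_def
  by (simp add: sum.distrib sum.cartesian_product mult.assoc)

lemma gospa2_core_eq:
  "gospa2_core dX dY y0 p C2 m v e n w f = (if n = 0 then 0 else
     1 / real n powr (1/p) * Min ((\<lambda>\<pi>. gospa_cost n m (C2 powr p) (vertex_cost dX p v w \<pi> {1..m})
        (edge_cost dY p e f \<pi> ({1..m} \<times> {1..m}))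
        (edge_cost dY p (\<lambda>_ _. y0) f \<pi> ({1..n} \<times> {1..n} - {1..m} \<times> {1..m})))
       ` {\<pi>. \<pi> permutes {1..n}}) powr (1/p))"
  unfolding gospa2_core_def gospa_cost_def vertex_cost_def edge_cost_def by simp

lemma gtt_core_eq:
  "gtt_core dX dY y0 p C m v e n w f =
     Min ((\<lambda>(I, \<pi>). gtt_cost dX dY y0 p C m v e n w f I \<pi>) ` (Pow {1..m} \<times> {\<pi>. \<pi> permutes {1..n}}))
       powr (1/p)"
  unfolding gtt_core_def gtt_cost_def vertex_cost_def edge_cost_def by simp

lemma vertex_cost_nonneg: "0 \<le> vertex_cost dX p v w \<pi> A"
  unfolding vertex_cost_def by (simp add: sum_nonneg)

lemma edge_cost_nonneg: "0 \<le> edge_cost dY p e f \<pi> A"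
  unfolding edge_cost_def by (simp add: sum_nonneg case_prod_beta)

lemma vertex_cost_split:
  "finite A \<Longrightarrow> B \<subseteq> A \<Longrightarrow> vertex_cost dX p v w \<pi> A = vertex_cost dX p v w \<pi> B + vertex_cost dX p v w \<pi> (A - B)"
  unfolding vertex_cost_def by (simp add: sum.subset_diff add.commute)

lemma edge_cost_split:
  "finite A \<Longrightarrow> B \<subseteq> A \<Longrightarrow> edge_cost dY p e f \<pi> A = edge_cost dY p e f \<pi> B + edge_cost dY p e f \<pi> (A - B)"
  unfolding edge_cost_def by (simp add: sum.subset_diff add.commute)

lemma vertex_cost_le:
  assumes "pseudometric dX" "\<forall>a b. dX a b \<le> CX" "0 \<le> p"
  shows "vertex_cost dX p v w \<pi> A \<le> real (card A) * CX powr p"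
  unfolding vertex_cost_def by (rule sum_bounded_above) (rule pseudometric_powr_le[OF assms])

lemma edge_cost_le:
  assumes "pseudometric dY" "\<forall>a b. dY a b \<le> CY" "0 \<le> p"
  shows "edge_cost dY p e f \<pi> A \<le> real (card A) * CY powr p"
  unfolding edge_cost_def case_prod_beta
  by (rule sum_bounded_above) (rule pseudometric_powr_le[OF assms])

lemma dummy_edge_cost_le:
  assumes pY: "pseudometric dY" and diamY: "\<forall>a b. dY a b \<le> CY" and "0 \<le> p"
    and f: "attr_graph y0 n f" and \<pi>: "\<pi> permutes {1..n}" and "m \<le> n"
  shows "edge_cost dY p (\<lambda>_ _. y0) f \<pi> ({1..n} \<times> {1..n} - {1..m} \<times> {1..m})
    \<le> (real n - real m) * (real n + real m - 1) * CY powr p"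
proof -
  define A where "A = {1..n} \<times> {1..n} - {1..m} \<times> {1..m}"
  define D where "D = (\<lambda>i. (i, i)) ` {m+1..n}"
  have D_sub: "D \<subseteq> A"
    using \<open>m \<le> n\<close> by (auto simp: A_def D_def)
  have "edge_cost dY p (\<lambda>_ _. y0) f \<pi> D = 0"
  proof -
    have "f (\<pi> i) (\<pi> i) = y0" if "i \<in> {1..n}" for i
      using f permutes_in_image[OF \<pi>] that by (simp add: attr_graph_def)
    then show ?thesis
      using pY \<open>m \<le> n\<close> by (auto simp: edge_cost_def D_def pseudometric_def intro!: sum.neutral)
  qed
  moreover have "real (card (A - D)) = (real n - real m) * (real n + real m - 1)"
  proof -
    have "real (card A) = real n * real n - real m * real m"
      unfolding A_def using \<open>m \<le> n\<close> by (subst real_card_Diff_subset) auto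
    moreover have "real (card D) = real n - real m"
      using \<open>m \<le> n\<close> by (simp add: D_def card_image inj_on_def)
    ultimately show ?thesis
      using real_card_Diff_subset[OF _ D_sub] by (simp add: A_def algebra_simps)
  qed
  ultimately show ?thesis
    using edge_cost_split[OF _ D_sub, of dY p "\<lambda>_ _. y0" f \<pi>]
      edge_cost_le[OF assms(1-3), of "\<lambda>_ _. y0" f \<pi> "A - D"]
    by (simp add: A_def)
qed

lemma dummy_edge_cost_le_gtt:
  assumes "\<pi> permutes {1..n}" and "I \<subseteq> {1..m}"
  shows "edge_cost dY p (\<lambda>_ _. y0) f \<pi> ({1..n} \<times> {1..n} - {1..m} \<times> {1..m})
    \<le> edge_cost dY p (\<lambda>_ _. y0) f id ({1..n} \<times> {1..n} - \<pi> ` I \<times> \<pi> ` I)"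
proof -
  have "edge_cost dY p (\<lambda>_ _. y0) f \<pi> ({1..n} \<times> {1..n} - {1..m} \<times> {1..m})
      = edge_cost dY p (\<lambda>_ _. y0) f id ({1..n} \<times> {1..n} - \<pi> ` {1..m} \<times> \<pi> ` {1..m})"
    unfolding edge_cost_def using sum_pairs_permutes_reindex[OF assms(1)] by simp
  also have "\<dots> \<le> edge_cost dY p (\<lambda>_ _. y0) f id ({1..n} \<times> {1..n} - \<pi> ` I \<times> \<pi> ` I)"
    unfolding edge_cost_def using assms(2) by (intro sum_mono2) auto
  finally show ?thesis .
qed

lemma inverse_pred_bounds:
  fixes n m :: nat
  assumes "1 \<le> n" "m \<le> n"
  shows "0 \<le> 1 / (real n - 1)" and "1 / (real n - 1) \<le> 1"
    and "1 / (real n - 1) * (real n - 1) \<le> 1"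
    and "1 / (real n - 1) * real m \<le> 2"
    and "1 / (real n - 1) * real m * (real n - real m) \<le> real n - real m"
proof -
  show "0 \<le> 1 / (real n - 1)" "1 / (real n - 1) \<le> 1" "1 / (real n - 1) * (real n - 1) \<le> 1"
    using assms(1) by (cases "n = 1"; simp add: field_simps)+
  show "1 / (real n - 1) * real m \<le> 2"
    using assms by (cases "n = 1") (auto simp: field_simps)
  show "1 / (real n - 1) * real m * (real n - real m) \<le> real n - real m"
  proof (cases "m = n")
    case False
    then have "1 / (real n - 1) * real m \<le> 1"
      using assms by (cases "n = 1") (auto simp: field_simps)
    then have "1 / (real n - 1) * real m * (real n - real m) \<le> 1 * (real n - real m)"
      using assms(2) by (intro mult_right_mono) auto
    then show ?thesis
      by simp
  qed simp
qed

lemma gospa_cost_expand: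
  "gospa_cost n m c X E G =
     (real n - real m) * c + X + 1/2 * (1 / (real n - 1) * E) + 1/2 * (1 / (real n - 1) * G)"
  unfolding gospa_cost_def by (simp only: distrib_left mult.assoc)

lemma gospa_cost_nonneg:
  "1 \<le> n \<Longrightarrow> m \<le> n \<Longrightarrow> 0 \<le> c \<Longrightarrow> 0 \<le> X \<Longrightarrow> 0 \<le> E \<Longrightarrow> 0 \<le> G \<Longrightarrow> 0 \<le> gospa_cost n m c X E G"
  unfolding gospa_cost_def by (simp add: inverse_pred_bounds(1))

lemma gospa_cost_uniform_le:
  assumes "1 \<le> n" "m \<le> n" "0 \<le> CY" "c1 + CY / 2 \<le> c2" "0 \<le> G"
  shows "gospa_cost n m c1 X E (real m * (real n - real m) * CY) \<le> gospa_cost n m c2 X E G"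
proof -
  define q d where "q = 1 / (real n - 1)" and "d = real n - real m"
  have "q * (real m * d * CY) \<le> d * CY"
    using mult_right_mono[OF inverse_pred_bounds(5)[OF assms(1,2)] assms(3)]
    by (simp add: q_def d_def mult.assoc)
  moreover have "d * c1 + d * CY / 2 \<le> d * c2"
    using assms(2,4) mult_left_mono[of "c1 + CY / 2" c2 d] by (simp add: d_def algebra_simps)
  moreover have "0 \<le> q * G"
    using inverse_pred_bounds(1)[OF assms(1,2)] assms(5) by (simp add: q_def)
  ultimately show ?thesis
    unfolding gospa_cost_expand q_def[symmetric] d_def[symmetric] by linarith
qed

lemma gospa_cost_le_uniform:
  assumes "1 \<le> n" "m \<le> n" "0 \<le> CY" "c2 + CY / 2 \<le> c1"
    and "G \<le> (real n - real m) * (real n + real m - 1) * CY"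
  shows "gospa_cost n m c2 X E G \<le> gospa_cost n m c1 X E (real m * (real n - real m) * CY)"
proof -
  define q d where "q = 1 / (real n - 1)" and "d = real n - real m"
  have "q * G \<le> q * ((real n - real m) * (real n + real m - 1) * CY)"
    using mult_left_mono[OF assms(5) inverse_pred_bounds(1)[OF assms(1,2)]] by (simp add: q_def)
  also have "\<dots> = q * (real n - 1) * (d * CY) + q * (real m * d * CY)"
    by (simp add: d_def algebra_simps)
  moreover have "q * (real n - 1) * (d * CY) \<le> d * CY"
    using mult_right_mono[OF inverse_pred_bounds(3)[OF assms(1,2)], of "d * CY"] assms(2,3)
    by (simp add: q_def d_def)
  moreover have "d * c2 + d * CY / 2 \<le> d * c1"
    using assms(2,4) mult_left_mono[of "c2 + CY / 2" c1 d] by (simp add: d_def algebra_simps)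
  ultimately show ?thesis
    unfolding gospa_cost_expand q_def[symmetric] d_def[symmetric] by linarith
qed

lemma unassigned_cost_le:
  fixes n m a :: nat
  assumes "a \<le> m" "m \<le> n" "1 \<le> n"
    and "0 \<le> CX" "0 \<le> CY" "CX + CY / 2 \<le> C" "c \<le> C"
    and XR: "XR \<le> (real m - real a) * CX" and ER: "ER \<le> (real m * real m - real a * real a) * CY"
  shows "(real n - real m) * c + XR + 1/2 * (1 / (real n - 1) * ER)
      + 1/2 * (1 / (real n - 1) * (real m * (real n - real m) * CY))
    \<le> real n * ((real n - real m + 2 * (real m - real a)) * C)"
proof -
  define q d k where "q = 1 / (real n - 1)" and "d = real n - real m" and "k = real m - real a"
  have "0 \<le> d" "0 \<le> k" "0 \<le> C"
    using assms by (simp_all add: d_def k_def)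
  have dc: "d * c \<le> d * C"
    using \<open>0 \<le> d\<close> \<open>c \<le> C\<close> by (rule mult_left_mono[rotated])
  have kCX: "k * CX \<le> k * C"
    using \<open>0 \<le> k\<close> assms(5,6) by (intro mult_left_mono) auto
  show ?thesis
  proof (cases "n = 1")
    case True
    then have "q = 0" and "real n * ((d + 2 * k) * C) = d * C + 2 * (k * C)"
      by (simp_all add: q_def algebra_simps)
    moreover have "0 \<le> k * C"
      using \<open>0 \<le> k\<close> \<open>0 \<le> C\<close> by simp
    ultimately show ?thesis
      using dc kCX XR unfolding q_def[symmetric] d_def[symmetric] k_def[symmetric]
      by simp
  next
    case False
    then have "2 \<le> n"
      using assms(3) by simp
    have "q * ER \<le> q * (2 * real m * k * CY)"
    proof -
      have "real m * real m - real a * real a \<le> 2 * real m * k"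
        using zero_le_power2[of "real m - real a"] by (simp add: k_def power2_eq_square algebra_simps)
      then have "ER \<le> 2 * real m * k * CY"
        using ER mult_right_mono[OF _ assms(5)] by (meson order.trans)
      then show ?thesis
        using inverse_pred_bounds(1)[OF assms(3,2)] unfolding q_def by (rule mult_left_mono)
    qed
    also have "\<dots> = 2 * k * CY * (q * real m)"
      by (simp add: algebra_simps)
    also have "\<dots> \<le> 2 * k * CY * 2"
      using inverse_pred_bounds(4)[OF assms(3,2)] \<open>0 \<le> k\<close> assms(5)
      by (intro mult_left_mono) (auto simp: q_def)
    finally have qER: "q * ER \<le> 4 * k * CY"
      by simp
    have qG: "q * (real m * d * CY) \<le> d * CY"
      using mult_right_mono[OF inverse_pred_bounds(5)[OF assms(3,2)] assms(5)]
      by (simp add: q_def d_def mult.assoc)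
    have "d * C + k * CX + 2 * k * CY + d * CY / 2 \<le> 2 * ((d + 2 * k) * C)"
      using mult_left_mono[OF _ \<open>0 \<le> d\<close>, of "CY / 2" C] mult_left_mono[OF _ \<open>0 \<le> k\<close>, of "CX + 2 * CY" "4 * C"]
        assms(4-6) by (simp add: algebra_simps)
    also have "\<dots> \<le> real n * ((d + 2 * k) * C)"
      using \<open>2 \<le> n\<close> \<open>0 \<le> d\<close> \<open>0 \<le> k\<close> \<open>0 \<le> C\<close> by (intro mult_right_mono) auto
    finally show ?thesis
      using dc XR qER qG unfolding q_def[symmetric] d_def[symmetric] k_def[symmetric]
      by (simp add: algebra_simps)
  qed
qed

lemma gospa_cost_le_gtt_cost:
  assumes pX: "pseudometric dX" and pY: "pseudometric dY" and "0 \<le> p"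
    and diamX: "\<forall>a b. dX a b \<le> CX" and diamY: "\<forall>a b. dY a b \<le> CY"
    and "CX powr p + CY powr p / 2 \<le> C powr p" and "c \<le> C powr p"
    and I: "I \<subseteq> {1..m}" and "m \<le> n" "1 \<le> n"
    and G: "G \<le> real m * (real n - real m) * CY powr p
                + edge_cost dY p (\<lambda>_ _. y0) f id ({1..n} \<times> {1..n} - \<pi> ` I \<times> \<pi> ` I)"
  shows "gospa_cost n m c (vertex_cost dX p v w \<pi> {1..m}) (edge_cost dY p e f \<pi> ({1..m} \<times> {1..m})) G
    \<le> real n * gtt_cost dX dY y0 p C m v e n w f I \<pi>"
proof -
  define q where "q = 1 / (real n - 1)"
  define XI XR where "XI = vertex_cost dX p v w \<pi> I" and "XR = vertex_cost dX p v w \<pi> ({1..m} - I)"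
  define EI ER where "EI = edge_cost dY p e f \<pi> (I \<times> I)"
    and "ER = edge_cost dY p e f \<pi> ({1..m} \<times> {1..m} - I \<times> I)"
  define Z1 Z2 where "Z1 = edge_cost dY p e (\<lambda>_ _. y0) \<pi> ({1..m} \<times> {1..m} - I \<times> I)"
    and "Z2 = edge_cost dY p (\<lambda>_ _. y0) f id ({1..n} \<times> {1..n} - \<pi> ` I \<times> \<pi> ` I)"
  have "card I \<le> m"
    using card_mono[OF _ I] by simp
  have "0 \<le> q" "q \<le> 1"
    using inverse_pred_bounds(1,2)[OF \<open>1 \<le> n\<close> \<open>m \<le> n\<close>] by (simp_all add: q_def)
  have split: "vertex_cost dX p v w \<pi> {1..m} = XI + XR" "edge_cost dY p e f \<pi> ({1..m} \<times> {1..m}) = EI + ER"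
    using vertex_cost_split[OF _ I] edge_cost_split[OF _ Sigma_mono[OF I I]]
    by (simp_all add: XI_def XR_def EI_def ER_def)
  have "XR \<le> (real m - real (card I)) * CX powr p"
    using vertex_cost_le[OF pX diamX \<open>0 \<le> p\<close>, of v w \<pi> "{1..m} - I"] real_card_Diff_subset[OF _ I]
    by (simp add: XR_def)
  moreover have "ER \<le> (real m * real m - real (card I) * real (card I)) * CY powr p"
    using edge_cost_le[OF pY diamY \<open>0 \<le> p\<close>, of e f \<pi> "{1..m} \<times> {1..m} - I \<times> I"]
      real_card_Diff_subset[OF _ Sigma_mono[OF I I]]
    by (simp add: ER_def card_cartesian_product)
  ultimately have unassigned: "(real n - real m) * c + XR + 1/2 * (q * ER)
      + 1/2 * (q * (real m * (real n - real m) * CY powr p))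
    \<le> real n * ((real n - real m + 2 * (real m - real (card I))) * C powr p)"
    unfolding q_def
    by (intro unassigned_cost_le) (use \<open>card I \<le> m\<close> assms in auto)
  have "q * G \<le> q * (real m * (real n - real m) * CY powr p) + q * Z2"
    using mult_left_mono[OF G \<open>0 \<le> q\<close>] by (simp add: Z2_def distrib_left)
  moreover have "q * Z2 \<le> real n * Z2" "q * EI \<le> real n * EI"
    using \<open>q \<le> 1\<close> \<open>1 \<le> n\<close> by (simp_all add: Z2_def EI_def edge_cost_nonneg mult_right_mono)
  moreover have "1 * XI \<le> real n * XI"
    using \<open>1 \<le> n\<close> vertex_cost_nonneg unfolding XI_def by (intro mult_right_mono) auto
  moreover have "0 \<le> real n * Z1"
    by (simp add: Z1_def edge_cost_nonneg)
  ultimately show ?thesis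
    using unassigned
    unfolding gospa_cost_expand gtt_cost_def split q_def[symmetric]
      XI_def[symmetric] EI_def[symmetric] Z1_def[symmetric] Z2_def[symmetric]
    by (simp add: algebra_simps)
qed

lemma normalized_root_Min_mono:
  fixes N :: real
  assumes "0 < p" "finite A" "A \<noteq> {}" "\<And>x. x \<in> A \<Longrightarrow> 0 \<le> f x" "\<And>x. x \<in> A \<Longrightarrow> f x \<le> g x"
  shows "1 / N powr (1/p) * Min (f ` A) powr (1/p) \<le> 1 / N powr (1/p) * Min (g ` A) powr (1/p)"
proof -
  have "Min (f ` A) \<le> Min (g ` A)"
    using assms by (intro Min_image_le_Min_image) auto
  then show ?thesis
    using assms by (intro mult_left_mono powr_mono2) auto
qed

lemma normalized_root_le_root:
  fixes N :: real
  assumes "1 \<le> N" "0 < p" "0 \<le> a" "a \<le> N * b"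
  shows "1 / N powr (1/p) * a powr (1/p) \<le> b powr (1/p)"
proof -
  have "a powr (1/p) \<le> N powr (1/p) * b powr (1/p)"
    using powr_mono2[of "1/p" a "N * b"] assms by (simp add: powr_mult)
  moreover have "0 < N powr (1/p)"
    using assms(1) by simp
  ultimately show ?thesis
    by (simp add: field_simps)
qed

lemma gospa_root_le_gtt_core:
  assumes "0 < p" "1 \<le> n" and T_nonneg: "\<And>\<pi>. \<pi> permutes {1..n} \<Longrightarrow> 0 \<le> T \<pi>"
    and T_le: "\<And>I \<pi>. I \<subseteq> {1..m} \<Longrightarrow> \<pi> permutes {1..n} \<Longrightarrow> T \<pi> \<le> real n * gtt_cost dX dY y0 p C m v e n w f I \<pi>"
  shows "1 / real n powr (1/p) * Min (T ` {\<pi>. \<pi> permutes {1..n}}) powr (1/p) \<le> gtt_core dX dY y0 p C m v e n w f"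
proof -
  let ?P = "{\<pi>. \<pi> permutes {1..n}}" and ?Q = "Pow {1..m} \<times> {\<pi>. \<pi> permutes {1..n}}"
  let ?G = "\<lambda>(I, \<pi>). gtt_cost dX dY y0 p C m v e n w f I \<pi>"
  have "Min (T ` ?P) \<le> Min ((\<lambda>z. real n * ?G z) ` ?Q)"
    using T_le permutations_atLeastAtMost by (intro Min_image_le_Min_image) auto
  also have "\<dots> = real n * Min (?G ` ?Q)"
  proof -
    have "mono ((*) (real n))"
      by (simp add: mono_def mult_left_mono)
    then show ?thesis
      using mono_Min_commute[of "(*) (real n)" "?G ` ?Q"] permutations_atLeastAtMost
      by (simp add: image_image Pow_not_empty)
  qed
  finally show ?thesis
    unfolding gtt_core_eq using assms permutations_atLeastAtMost
    by (intro normalized_root_le_root) auto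
qed

lemma gospa1_core_eq_gospa2_core:
  "gospa1_core dX dY p C1 CY n v e n w f = gospa2_core dX dY y0 p C2 n v e n w f"
  unfolding gospa1_core_eq gospa2_core_eq gospa_cost_def edge_cost_def by simp

lemma gospa1_core_le_gospa2_core:
  assumes "0 < p" "m \<le> n" "C1 powr p + CY powr p / 2 \<le> C2 powr p"
  shows "gospa1_core dX dY p C1 CY m v e n w f \<le> gospa2_core dX dY y0 p C2 m v e n w f"
proof (cases "n = 0")
  case False
  then have "1 \<le> n"
    by simp
  show ?thesis
    unfolding gospa1_core_eq gospa2_core_eq if_not_P[OF False]
    by (intro normalized_root_Min_mono permutations_atLeastAtMost gospa_cost_uniform_le)
       (use \<open>1 \<le> n\<close> assms in \<open>auto intro!: gospa_cost_nonneg simp: vertex_cost_nonneg edge_cost_nonneg\<close>)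
qed (simp add: gospa1_core_eq gospa2_core_eq)

lemma gospa2_core_le_gospa1_core:
  assumes pY: "pseudometric dY" and diamY: "\<forall>a b. dY a b \<le> CY" and "0 < p"
    and f: "attr_graph y0 n f" and "m \<le> n" and "C2 powr p + CY powr p / 2 \<le> C1 powr p"
  shows "gospa2_core dX dY y0 p C2 m v e n w f \<le> gospa1_core dX dY p C1 CY m v e n w f"
proof (cases "n = 0")
  case False
  then have "1 \<le> n"
    by simp
  show ?thesis
    unfolding gospa1_core_eq gospa2_core_eq if_not_P[OF False]
    by (intro normalized_root_Min_mono permutations_atLeastAtMost gospa_cost_le_uniform)
       (use \<open>1 \<le> n\<close> assms dummy_edge_cost_le[OF pY diamY _ f] in
        \<open>auto intro!: gospa_cost_nonneg simp: vertex_cost_nonneg edge_cost_nonneg\<close>)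
qed (simp add: gospa1_core_eq gospa2_core_eq)

lemma gospa1_core_le_gtt_core:
  assumes "pseudometric dX" "pseudometric dY" "0 < p" "\<forall>a b. dX a b \<le> CX" "\<forall>a b. dY a b \<le> CY"
    and "m \<le> n" "CX powr p + CY powr p / 2 \<le> C1 powr p" "C1 powr p \<le> C powr p"
  shows "gospa1_core dX dY p C1 CY m v e n w f \<le> gtt_core dX dY y0 p C m v e n w f"
proof (cases "n = 0")
  case False
  then have "1 \<le> n"
    by simp
  show ?thesis
    unfolding gospa1_core_eq if_not_P[OF False]
    by (intro gospa_root_le_gtt_core gospa_cost_le_gtt_cost)
       (use \<open>1 \<le> n\<close> assms in \<open>auto intro!: gospa_cost_nonneg add_increasing2
          simp: vertex_cost_nonneg edge_cost_nonneg\<close>)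
qed (simp add: gospa1_core_eq gtt_core_eq)

lemma gospa2_core_le_gtt_core:
  assumes "pseudometric dX" "pseudometric dY" "0 < p" "\<forall>a b. dX a b \<le> CX" "\<forall>a b. dY a b \<le> CY"
    and "m \<le> n" "CX powr p + CY powr p \<le> C2 powr p" "C2 powr p \<le> C powr p"
  shows "gospa2_core dX dY y0 p C2 m v e n w f \<le> gtt_core dX dY y0 p C m v e n w f"
proof (cases "n = 0")
  case False
  then have "1 \<le> n"
    by simp
  have "CX powr p + CY powr p / 2 \<le> C powr p"
    using assms(7,8) powr_ge_zero[of CY p] by linarith
  then show ?thesis
    unfolding gospa2_core_eq if_not_P[OF False]
    by (intro gospa_root_le_gtt_core gospa_cost_le_gtt_cost)
       (use \<open>1 \<le> n\<close> assms dummy_edge_cost_le_gtt in \<open>auto intro!: gospa_cost_nonneg add_increasing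
          simp: vertex_cost_nonneg edge_cost_nonneg\<close>)
qed (simp add: gospa2_core_eq gtt_core_eq)

theorem mainTheorem8:
  fixes dX :: "'x \<Rightarrow> 'x \<Rightarrow> real" and dY :: "'y \<Rightarrow> 'y \<Rightarrow> real" and y0 :: 'y
    and p CX CY C1 C2 :: real
  assumes pX: "pseudometric dX" and pY: "pseudometric dY"
    and p1: "p \<ge> 1"
    and diamX: "\<forall>a b. dX a b \<le> CX" and diamY: "\<forall>a b. dY a b \<le> CY"
    and C1nn: "C1 \<ge> 0" and C2nn: "C2 \<ge> 0"
    and C1: "C1 powr p \<ge> CX powr p + 1/2 * CY powr p"
    and C2: "C2 powr p \<ge> CX powr p + CY powr p"
    and ultra: "p > 1 \<longrightarrow> (\<forall>y1 y2. dY y1 y2 \<le> max (dY y1 y0) (dY y0 y2))"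
  shows
    "(\<forall>n v e w f. attr_graph y0 n e \<and> attr_graph y0 n f \<longrightarrow>
        gospa1_dist dX dY p C1 CY n v e n w f = gospa2_dist dX dY y0 p C2 n v e n w f)
   \<and> (C1 powr p \<le> C2 powr p - 1/2 * CY powr p \<longrightarrow>
       (\<forall>m v e n w f. attr_graph y0 m e \<and> attr_graph y0 n f \<longrightarrow>
        gospa1_dist dX dY p C1 CY m v e n w f \<le> gospa2_dist dX dY y0 p C2 m v e n w f))
   \<and> (C2 powr p \<le> C1 powr p - 1/2 * CY powr p \<longrightarrow>
       (\<forall>m v e n w f. attr_graph y0 m e \<and> attr_graph y0 n f \<longrightarrow>
        gospa1_dist dX dY p C1 CY m v e n w f \<ge> gospa2_dist dX dY y0 p C2 m v e n w f))
   \<and> (\<forall>C. C > 0 \<and> C powr p \<ge> C1 powr p \<longrightarrow>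
       (\<forall>m v e n w f. attr_graph y0 m e \<and> attr_graph y0 n f \<longrightarrow>
        gtt_dist dX dY y0 p C m v e n w f \<ge> gospa1_dist dX dY p C1 CY m v e n w f))
   \<and> (\<forall>C. C > 0 \<and> C powr p \<ge> C2 powr p \<longrightarrow>
       (\<forall>m v e n w f. attr_graph y0 m e \<and> attr_graph y0 n f \<longrightarrow>
        gtt_dist dX dY y0 p C m v e n w f \<ge> gospa2_dist dX dY y0 p C2 m v e n w f))"
proof -
  have "0 < p"
    using p1 by simp
  show ?thesis
  proof (intro conjI allI impI, goal_cases)
    case (1 n v e w f)
    then show ?case
      by (simp add: gospa1_dist_def gospa2_dist_def gospa1_core_eq_gospa2_core)
  next
    case (2 m v e n w f)
    then have "C1 powr p + CY powr p / 2 \<le> C2 powr p"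
      by simp
    then show ?case
      using \<open>0 < p\<close> by (simp add: gospa1_dist_def gospa2_dist_def gospa1_core_le_gospa2_core)
  next
    case (3 m v e n w f)
    then have "C2 powr p + CY powr p / 2 \<le> C1 powr p"
      by simp
    with 3 \<open>0 < p\<close> show ?case
      unfolding gospa1_dist_def gospa2_dist_def
      by (auto intro!: gospa2_core_le_gospa1_core[OF pY diamY])
  next
    case (4 C m v e n w f)
    then show ?case
      using C1 \<open>0 < p\<close> gospa1_core_le_gtt_core[OF pX pY _ diamX diamY]
      by (simp add: gospa1_dist_def gtt_dist_def)
  next
    case (5 C m v e n w f)
    then show ?case
      using C2 \<open>0 < p\<close> gospa2_core_le_gtt_core[OF pX pY _ diamX diamY]
      by (simp add: gospa2_dist_def gtt_dist_def)
  qed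
qed

end
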